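(* Let $u_1,\dots,u_n$ be Boolean variables and $C_1,\dots,C_m$ clauses, each consisting of exactly 3 literals over these variables. Let $G$ be the graph with vertex set $\{x_i,u_i,v_i,\bar u_i,y_i:1\le i\le n\}\cup\{c_j:1\le j\le m\}\cup\{s_1,s_2,s_3,s_4,t\}$ and the following edges: for each $i$, $x_iu_i$, $u_iv_i$, $v_i\bar u_i$, $\bar u_iy_i$; for each $j$, an edge from $c_j$ to $u_i$ (resp. $\bar u_i$) whenever the literal $u_i$ (resp. $\bar u_i$) appears in $C_j$; for each $j$ and each $s\in\{s_1,s_3,s_4\}$, the edge $sc_j$; the edges $s_1s_2,s_3s_2,s_4s_2$; the edges $ts_1,ts_3,ts_4$; and the edges $tu_i$, $t\bar u_i$ for all $i$. Then $\tilde\gamma_c(G)\ge 3n+1$, and the collection $\{C_1,\dots,C_m\}$ is satisfiable if and only if $\tilde\gamma_c(G)=3n+1$.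
   Context: All graphs are finite and simple. A set $S\subseteq V$ is a dominating set of $G=(V,E)$ if every vertex not in $S$ is adjacent to a vertex of $S$. A set $\tilde D\subseteq V$ is an outer-connected dominating set of $G$ if $\tilde D$ is dominating and the induced subgraph $G[V\setminus\tilde D]$ is connected (the empty graph counts as connected). $\tilde\gamma_c(G)$ denotes the minimum size of an outer-connected dominating set of $G$. A collection of clauses is satisfiable if some truth assignment to the variables makes every clause contain a true literal. *)

theory Defs
  imports Main
begin

definition dominating :: "'a set \<Rightarrow> ('a \<Rightarrow> 'a \<Rightarrow> bool) \<Rightarrow> 'a set \<Rightarrow> bool" where
  "dominating Vs E S \<longleftrightarrow> S \<subseteq> Vs \<and> (\<forall>v \<in> Vs - S. \<exists>s \<in> S. E v s)"

text \<open>Connectedness of the induced subgraph on W (the empty graph counts as connected).\<close>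
definition induced_connected :: "('a \<Rightarrow> 'a \<Rightarrow> bool) \<Rightarrow> 'a set \<Rightarrow> bool" where
  "induced_connected E W \<longleftrightarrow>
     (\<forall>a \<in> W. \<forall>b \<in> W. (a, b) \<in> {(x, y). x \<in> W \<and> y \<in> W \<and> E x y}\<^sup>*)"

definition outer_connected_dominating :: "'a set \<Rightarrow> ('a \<Rightarrow> 'a \<Rightarrow> bool) \<Rightarrow> 'a set \<Rightarrow> bool" where
  "outer_connected_dominating Vs E D \<longleftrightarrow> dominating Vs E D \<and> induced_connected E (Vs - D)"

definition gamma_oc :: "'a set \<Rightarrow> ('a \<Rightarrow> 'a \<Rightarrow> bool) \<Rightarrow> nat" where
  "gamma_oc Vs E = (LEAST k. \<exists>D. outer_connected_dominating Vs E D \<and> card D = k)"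

datatype vtx = X nat | U nat | V nat | UB nat | Y nat | C nat | S1 | S2 | S3 | S4 | T

text \<open>A literal is a pair (i, b): (i, True) is u_i and (i, False) is the negation of u_i.
  Clauses are indexed 1..m, each a set of literals.\<close>

definition red_verts :: "nat \<Rightarrow> nat \<Rightarrow> vtx set" where
  "red_verts n m = X ` {1..n} \<union> U ` {1..n} \<union> V ` {1..n} \<union> UB ` {1..n} \<union> Y ` {1..n}
     \<union> C ` {1..m} \<union> {S1, S2, S3, S4, T}"

definition red_base_edge :: "nat \<Rightarrow> nat \<Rightarrow> (nat \<Rightarrow> (nat \<times> bool) set) \<Rightarrow> vtx \<Rightarrow> vtx \<Rightarrow> bool" where
  "red_base_edge n m Cl a b \<longleftrightarrow>
     (\<exists>i \<in> {1..n}. (a = X i \<and> b = U i) \<or> (a = U i \<and> b = V i) \<or> (a = V i \<and> b = UB i)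
        \<or> (a = UB i \<and> b = Y i) \<or> (a = T \<and> b = U i) \<or> (a = T \<and> b = UB i))
   \<or> (\<exists>j \<in> {1..m}. \<exists>i \<in> {1..n}. ((i, True) \<in> Cl j \<and> a = C j \<and> b = U i)
        \<or> ((i, False) \<in> Cl j \<and> a = C j \<and> b = UB i))
   \<or> (\<exists>j \<in> {1..m}. a \<in> {S1, S3, S4} \<and> b = C j)
   \<or> (a \<in> {S1, S3, S4} \<and> b = S2)
   \<or> (a = T \<and> b \<in> {S1, S3, S4})"

definition red_adj :: "nat \<Rightarrow> nat \<Rightarrow> (nat \<Rightarrow> (nat \<times> bool) set) \<Rightarrow> vtx \<Rightarrow> vtx \<Rightarrow> bool" where
  "red_adj n m Cl a b \<longleftrightarrow> red_base_edge n m Cl a b \<or> red_base_edge n m Cl b a"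

definition satisfiable :: "nat \<Rightarrow> (nat \<Rightarrow> (nat \<times> bool) set) \<Rightarrow> bool" where
  "satisfiable m Cl \<longleftrightarrow> (\<exists>a :: nat \<Rightarrow> bool. \<forall>j \<in> {1..m}. \<exists>(i, b) \<in> Cl j. a i = b)"

end

theory Submission
  imports Defs
begin

text \<open>Each variable gadget \<open>x\<^sub>i u\<^sub>i v\<^sub>i \<not>u\<^sub>i y\<^sub>i\<close> needs three vertices of an
  outer-connected dominating set \<open>D\<close>: the pendant vertices \<open>x\<^sub>i, y\<^sub>i\<close> and a dominator of
  \<open>v\<^sub>i\<close>; one more vertex of \<open>{s\<^sub>1, \<dots>, s\<^sub>4}\<close> is needed to dominate \<open>s\<^sub>2\<close>. Hence
  \<open>|D| \<ge> 3n + 1\<close>. If equality holds, \<open>D\<close> avoids \<open>t\<close> and all clause vertices, contains at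
  most one of \<open>u\<^sub>i, \<not>u\<^sub>i\<close> for each \<open>i\<close>, and contains \<open>s\<^sub>2\<close> but not \<open>s\<^sub>1, s\<^sub>3, s\<^sub>4\<close>;
  so every clause vertex is dominated by a literal vertex in \<open>D\<close>, and setting \<open>u\<^sub>i\<close> true iff
  \<open>u\<^sub>i \<in> D\<close> satisfies all clauses. Conversely, the pendant vertices, the true literals and
  \<open>s\<^sub>2\<close> form such a set, whose complement is connected through \<open>t\<close>.\<close>

lemma outer_connected_dominating_all: "outer_connected_dominating Vs E Vs"
  by (simp add: outer_connected_dominating_def dominating_def induced_connected_def)

lemma gamma_oc_attained:
  obtains D where "outer_connected_dominating Vs E D" "card D = gamma_oc Vs E"
proof -
  have "\<exists>k D. outer_connected_dominating Vs E D \<and> card D = k"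
    using outer_connected_dominating_all by blast
  from LeastI_ex[OF this] show ?thesis
    using that unfolding gamma_oc_def by blast
qed

lemma gamma_oc_le: "outer_connected_dominating Vs E D \<Longrightarrow> gamma_oc Vs E \<le> card D"
  unfolding gamma_oc_def by (rule Least_le) blast

lemma ocd_dominated:
  assumes "outer_connected_dominating Vs E D" "v \<in> Vs" "v \<notin> D"
  obtains s where "s \<in> D" "E v s"
  using assms unfolding outer_connected_dominating_def dominating_def by blast

lemma ocd_subset: "outer_connected_dominating Vs E D \<Longrightarrow> D \<subseteq> Vs"
  unfolding outer_connected_dominating_def dominating_def by blast

text \<open>If \<open>x \<notin> D\<close>, its only neighbour \<open>u\<close> must dominate it, so \<open>x\<close> is isolated in \<open>G - D\<close>,
  which has a second vertex.\<close>
lemma pendant_in_ocd: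
  assumes ocd: "outer_connected_dominating Vs E D" and two: "2 \<le> card (Vs - D)"
    and x: "x \<in> Vs" and pendant: "\<And>w. E x w \<Longrightarrow> w = u"
  shows "x \<in> D"
proof (rule ccontr)
  assume "x \<notin> D"
  with x have xW: "x \<in> Vs - D" by simp
  obtain s where "s \<in> D" "E x s" using ocd_dominated[OF ocd x \<open>x \<notin> D\<close>] .
  with pendant have uD: "u \<in> D" by blast
  obtain b where b: "b \<in> Vs - D" "b \<noteq> x"
  proof (rule ccontr)
    assume "\<not> thesis"
    with that have "Vs - D \<subseteq> {x}" by blast
    from card_mono[OF _ this] two show False by simp
  qed
  have "(x, b) \<in> {(p, q). p \<in> Vs - D \<and> q \<in> Vs - D \<and> E p q}\<^sup>*"
    using ocd xW b(1) unfolding outer_connected_dominating_def induced_connected_def by blast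
  then show False
  proof (cases rule: converse_rtranclE)
    case base
    with b(2) show False by simp
  next
    case (step c)
    with pendant uD show False by blast
  qed
qed

lemma induced_connected_via_hub:
  assumes sym: "\<And>a b. E a b \<Longrightarrow> E b a"
    and hub: "\<And>v. v \<in> W \<Longrightarrow> (v, t) \<in> {(p, q). p \<in> W \<and> q \<in> W \<and> E p q}\<^sup>*"
  shows "induced_connected E W"
  unfolding induced_connected_def
proof (intro ballI)
  fix a b assume "a \<in> W" "b \<in> W"
  define R where "R = {(p, q). p \<in> W \<and> q \<in> W \<and> E p q}"
  have "R\<inverse> = R" using sym by (auto simp: R_def)
  then have "(t, b) \<in> R\<^sup>*"
    using hub[OF \<open>b \<in> W\<close>] by (metis R_def converseI rtrancl_converse)
  with hub[OF \<open>a \<in> W\<close>] show "(a, b) \<in> R\<^sup>*" unfolding R_def by simp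
qed

lemma sum_ge_const_eq_imp_eq:
  fixes f :: "'a \<Rightarrow> nat"
  assumes "finite A" "\<forall>i\<in>A. c \<le> f i" "sum f A = card A * c" "i \<in> A"
  shows "f i = c"
proof (rule ccontr)
  assume "f i \<noteq> c"
  with assms have "(\<Sum>_\<in>A. c) < sum f A"
    by (intro sum_strict_mono_ex1) (auto intro: le_neq_implies_less)
  with assms(3) show False by simp
qed

lemma red_adj_sym: "red_adj n m Cl a b \<Longrightarrow> red_adj n m Cl b a"
  by (auto simp: red_adj_def)

lemma red_adj_X: "red_adj n m Cl (X i) w \<longleftrightarrow> i \<in> {1..n} \<and> w = U i"
  by (auto simp: red_adj_def red_base_edge_def)

lemma red_adj_Y: "red_adj n m Cl (Y i) w \<longleftrightarrow> i \<in> {1..n} \<and> w = UB i"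
  by (auto simp: red_adj_def red_base_edge_def)

lemma red_adj_V: "red_adj n m Cl (V i) w \<longleftrightarrow> i \<in> {1..n} \<and> (w = U i \<or> w = UB i)"
  by (auto simp: red_adj_def red_base_edge_def)

lemma red_adj_S2: "red_adj n m Cl S2 w \<longleftrightarrow> w \<in> {S1, S3, S4}"
  by (auto simp: red_adj_def red_base_edge_def)

lemma red_adj_S134:
  "s \<in> {S1, S3, S4} \<Longrightarrow> red_adj n m Cl s w \<longleftrightarrow> w = S2 \<or> w = T \<or> w \<in> C ` {1..m}"
  by (auto simp: red_adj_def red_base_edge_def)

lemma red_adj_T:
  "red_adj n m Cl T w \<longleftrightarrow> w \<in> {S1, S3, S4} \<or> (\<exists>i\<in>{1..n}. w = U i \<or> w = UB i)"
  by (auto simp: red_adj_def red_base_edge_def)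

lemma red_adj_C:
  "red_adj n m Cl (C j) w \<longleftrightarrow> j \<in> {1..m} \<and> (w \<in> {S1, S3, S4}
     \<or> (\<exists>i\<in>{1..n}. (i, True) \<in> Cl j \<and> w = U i) \<or> (\<exists>i\<in>{1..n}. (i, False) \<in> Cl j \<and> w = UB i))"
  by (auto simp: red_adj_def red_base_edge_def)

definition var_gadget :: "nat \<Rightarrow> vtx set" where
  "var_gadget i = {X i, U i, V i, UB i, Y i}"

definition s_gadget :: "vtx set" where
  "s_gadget = {S1, S2, S3, S4}"

definition hub_part :: "nat \<Rightarrow> vtx set" where
  "hub_part m = insert T (C ` {1..m})"

lemma red_verts_gadgets:
  "red_verts n m = (\<Union>i\<in>{1..n}. var_gadget i) \<union> s_gadget \<union> hub_part m"
  by (auto simp: red_verts_def var_gadget_def s_gadget_def hub_part_def)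

lemma finite_red_verts: "finite (red_verts n m)"
  by (simp add: red_verts_def)

lemma card_by_gadgets:
  assumes "D \<subseteq> red_verts n m"
  shows "card D = (\<Sum>i\<in>{1..n}. card (D \<inter> var_gadget i)) + card (D \<inter> s_gadget)
    + card (D \<inter> hub_part m)"
proof -
  have fin: "finite D" using assms finite_red_verts by (rule finite_subset)
  have "D = (\<Union>i\<in>{1..n}. D \<inter> var_gadget i) \<union> (D \<inter> s_gadget) \<union> (D \<inter> hub_part m)"
    using assms unfolding red_verts_gadgets by blast
  then have "card D = card \<dots>" by (rule arg_cong)
  also have "\<dots> = card ((\<Union>i\<in>{1..n}. D \<inter> var_gadget i) \<union> (D \<inter> s_gadget))
      + card (D \<inter> hub_part m)"
    by (rule card_Un_disjoint) (use fin in \<open>auto simp: var_gadget_def s_gadget_def hub_part_def\<close>)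
  also have "card ((\<Union>i\<in>{1..n}. D \<inter> var_gadget i) \<union> (D \<inter> s_gadget))
      = card (\<Union>i\<in>{1..n}. D \<inter> var_gadget i) + card (D \<inter> s_gadget)"
    by (rule card_Un_disjoint) (use fin in \<open>auto simp: var_gadget_def s_gadget_def\<close>)
  also have "card (\<Union>i\<in>{1..n}. D \<inter> var_gadget i) = (\<Sum>i\<in>{1..n}. card (D \<inter> var_gadget i))"
    by (rule card_UN_disjoint) (use fin in \<open>auto simp: var_gadget_def\<close>)
  finally show ?thesis .
qed

lemma card_red_verts_ge: "5 * n + 4 \<le> card (red_verts n m)"
proof -
  have "red_verts n m \<inter> var_gadget i = var_gadget i" if "i \<in> {1..n}" for i
    using that by (auto simp: red_verts_def var_gadget_def)
  moreover have "red_verts n m \<inter> s_gadget = s_gadget"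
    by (auto simp: red_verts_def s_gadget_def)
  ultimately have "card (red_verts n m) \<ge> (\<Sum>i\<in>{1..n}. card (var_gadget i)) + card s_gadget"
    using card_by_gadgets[of "red_verts n m" n m] by simp
  then show ?thesis by (simp add: var_gadget_def s_gadget_def)
qed

section \<open>The lower bound\<close>

context
  fixes n m :: nat and Cl :: "nat \<Rightarrow> (nat \<times> bool) set" and D :: "vtx set"
  assumes ocd: "outer_connected_dominating (red_verts n m) (red_adj n m Cl) D"
begin

lemma ocd_var_gadget_card:
  assumes two: "2 \<le> card (red_verts n m - D)" and i: "i \<in> {1..n}"
  shows "card (D \<inter> var_gadget i) = 2 + card (D \<inter> {U i, V i, UB i})"
proof -
  have "X i \<in> D"
    by (rule pendant_in_ocd[OF ocd two, of _ "U i"]) (use i in \<open>auto simp: red_verts_def red_adj_X\<close>)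
  moreover have "Y i \<in> D"
    by (rule pendant_in_ocd[OF ocd two, of _ "UB i"]) (use i in \<open>auto simp: red_verts_def red_adj_Y\<close>)
  ultimately have "D \<inter> var_gadget i = {X i, Y i} \<union> (D \<inter> {U i, V i, UB i})"
    by (auto simp: var_gadget_def)
  then show ?thesis by (simp add: card_Un_disjoint)
qed

lemma ocd_meets_path: "i \<in> {1..n} \<Longrightarrow> D \<inter> {U i, V i, UB i} \<noteq> {}"
  using ocd_dominated[OF ocd, of "V i"] by (fastforce simp: red_verts_def red_adj_V)

lemma ocd_meets_s_gadget: "D \<inter> s_gadget \<noteq> {}"
  using ocd_dominated[OF ocd, of S2] by (fastforce simp: red_verts_def red_adj_S2 s_gadget_def)

lemma ocd_gadget_bounds:
  assumes "2 \<le> card (red_verts n m - D)"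
  shows "\<forall>i\<in>{1..n}. 3 \<le> card (D \<inter> var_gadget i)" and "1 \<le> card (D \<inter> s_gadget)"
proof -
  have fin: "finite D" using ocd_subset[OF ocd] finite_red_verts by (rule finite_subset)
  show "\<forall>i\<in>{1..n}. 3 \<le> card (D \<inter> var_gadget i)"
  proof
    fix i assume i: "i \<in> {1..n}"
    have "0 < card (D \<inter> {U i, V i, UB i})"
      using ocd_meets_path[OF i] fin by (simp add: card_gt_0_iff)
    then show "3 \<le> card (D \<inter> var_gadget i)" using ocd_var_gadget_card[OF assms i] by linarith
  qed
  show "1 \<le> card (D \<inter> s_gadget)"
    using ocd_meets_s_gadget fin by (simp add: Suc_le_eq card_gt_0_iff)
qed

lemma card_outside_ocd: "card (red_verts n m - D) = card (red_verts n m) - card D"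
  using ocd_subset[OF ocd] by (intro card_Diff_subset finite_subset[OF _ finite_red_verts])

lemma ocd_card_ge: "3 * n + 1 \<le> card D"
proof (cases "2 \<le> card (red_verts n m - D)")
  case True
  have "3 * n = (\<Sum>i\<in>{1..n}. 3)" by simp
  also have "\<dots> \<le> (\<Sum>i\<in>{1..n}. card (D \<inter> var_gadget i))"
    using ocd_gadget_bounds(1)[OF True] by (intro sum_mono) blast
  finally show ?thesis
    using ocd_gadget_bounds(2)[OF True] card_by_gadgets[OF ocd_subset[OF ocd]] by linarith
next
  case False
  with card_outside_ocd card_red_verts_ge[of n m] show ?thesis by linarith
qed

section \<open>Tight sets encode satisfying assignments\<close>

context
  assumes tight: "card D = 3 * n + 1"
begin

lemma tight_ocd_two_outside: "2 \<le> card (red_verts n m - D)"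
  using tight card_outside_ocd card_red_verts_ge[of n m] by linarith

lemma tight_ocd_gadget_cards:
  shows "\<forall>i\<in>{1..n}. card (D \<inter> var_gadget i) = 3"
    and "card (D \<inter> s_gadget) = 1"
    and "D \<inter> hub_part m = {}"
proof -
  note bounds = ocd_gadget_bounds[OF tight_ocd_two_outside]
  let ?\<sigma> = "\<Sum>i\<in>{1..n}. card (D \<inter> var_gadget i)"
  have "(\<Sum>i\<in>{1..n}. 3) \<le> ?\<sigma>"
    using bounds(1) by (intro sum_mono) blast
  then have "3 * n \<le> ?\<sigma>" by simp
  moreover have "card D = ?\<sigma> + card (D \<inter> s_gadget) + card (D \<inter> hub_part m)"
    using ocd_subset[OF ocd] by (rule card_by_gadgets)
  ultimately have \<sigma>: "?\<sigma> = 3 * n" and s: "card (D \<inter> s_gadget) = 1"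
    and hub: "card (D \<inter> hub_part m) = 0"
    using tight bounds(2) by linarith+
  show "\<forall>i\<in>{1..n}. card (D \<inter> var_gadget i) = 3"
    using sum_ge_const_eq_imp_eq[OF _ bounds(1)] \<sigma> by simp
  show "card (D \<inter> s_gadget) = 1" by (fact s)
  have "finite D" using ocd_subset[OF ocd] finite_red_verts by (rule finite_subset)
  with hub show "D \<inter> hub_part m = {}" by simp
qed

lemma tight_ocd_one_literal: "i \<in> {1..n} \<Longrightarrow> U i \<notin> D \<or> UB i \<notin> D"
proof (rule ccontr)
  assume i: "i \<in> {1..n}" and "\<not> (U i \<notin> D \<or> UB i \<notin> D)"
  then have "{U i, UB i} \<subseteq> D \<inter> {U i, V i, UB i}" by auto
  then have "card {U i, UB i} \<le> card (D \<inter> {U i, V i, UB i})" by (intro card_mono) auto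
  then have "2 + 2 \<le> card (D \<inter> var_gadget i)"
    using ocd_var_gadget_card[OF tight_ocd_two_outside i] by simp
  with tight_ocd_gadget_cards(1) i show False by simp
qed

text \<open>If \<open>s\<^sub>2 \<notin> D\<close>, the vertices \<open>s\<^sub>1\<close> and \<open>s\<^sub>3\<close> can only be dominated from inside
  the hub part, which \<open>D\<close> avoids; so both would lie in \<open>D\<close>.\<close>
lemma tight_ocd_s_gadget: "D \<inter> s_gadget = {S2}"
proof -
  have S2_or: "S2 \<in> D \<or> s \<in> D" if s: "s \<in> {S1, S3}" for s
  proof (rule ccontr)
    assume out: "\<not> (S2 \<in> D \<or> s \<in> D)"
    moreover have "s \<in> red_verts n m" using s by (auto simp: red_verts_def)
    ultimately obtain w where "w \<in> D" "red_adj n m Cl s w"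
      using ocd_dominated[OF ocd] by blast
    with s out tight_ocd_gadget_cards(3) show False
      by (auto simp: red_adj_S134 hub_part_def)
  qed
  obtain s where "D \<inter> s_gadget = {s}"
    using tight_ocd_gadget_cards(2) by (auto simp: card_1_singleton_iff)
  with S2_or[of S1] S2_or[of S3] show ?thesis by (auto simp: s_gadget_def)
qed

lemma tight_ocd_satisfiable: "satisfiable m Cl"
  unfolding satisfiable_def
proof (intro exI[of _ "\<lambda>i. U i \<in> D"] ballI)
  fix j assume j: "j \<in> {1..m}"
  have "C j \<in> red_verts n m" "C j \<notin> D"
    using j tight_ocd_gadget_cards(3) by (auto simp: red_verts_def hub_part_def)
  then obtain w where w: "w \<in> D" "red_adj n m Cl (C j) w" by (rule ocd_dominated[OF ocd])
  have "w \<notin> {S1, S3, S4}" using w(1) tight_ocd_s_gadget by (auto simp: s_gadget_def)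
  with w consider i where "i \<in> {1..n}" "(i, True) \<in> Cl j" "U i \<in> D"
    | i where "i \<in> {1..n}" "(i, False) \<in> Cl j" "UB i \<in> D"
    unfolding red_adj_C by blast
  then show "\<exists>(i, b)\<in>Cl j. (U i \<in> D) = b"
  proof cases
    case (1 i)
    then show ?thesis by (intro bexI[of _ "(i, True)"]) simp_all
  next
    case (2 i)
    then have "U i \<notin> D" using tight_ocd_one_literal by blast
    with 2 show ?thesis by (intro bexI[of _ "(i, False)"]) simp_all
  qed
qed

end

end

section \<open>Satisfying assignments give tight sets\<close>

definition true_literal :: "(nat \<Rightarrow> bool) \<Rightarrow> nat \<Rightarrow> vtx" where
  "true_literal a i = (if a i then U i else UB i)"

definition false_literal :: "(nat \<Rightarrow> bool) \<Rightarrow> nat \<Rightarrow> vtx" where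
  "false_literal a i = (if a i then UB i else U i)"

definition assignment_set :: "nat \<Rightarrow> (nat \<Rightarrow> bool) \<Rightarrow> vtx set" where
  "assignment_set n a = X ` {1..n} \<union> Y ` {1..n} \<union> true_literal a ` {1..n} \<union> {S2}"

lemma assignment_set_subset: "assignment_set n a \<subseteq> red_verts n m"
  by (auto simp: assignment_set_def red_verts_def true_literal_def)

lemma card_assignment_set: "card (assignment_set n a) = 3 * n + 1"
proof -
  have "assignment_set n a \<inter> var_gadget i = {X i, Y i, true_literal a i}" if "i \<in> {1..n}" for i
    using that by (auto simp: assignment_set_def var_gadget_def true_literal_def)
  moreover have "assignment_set n a \<inter> s_gadget = {S2}"
    by (auto simp: assignment_set_def s_gadget_def true_literal_def)
  moreover have "assignment_set n a \<inter> hub_part m = {}"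
    by (auto simp: assignment_set_def hub_part_def true_literal_def)
  ultimately show ?thesis
    using card_by_gadgets[OF assignment_set_subset, of n a m]
    by (simp add: true_literal_def)
qed

lemma dominating_assignment_set:
  assumes n: "n \<ge> 1"
    and vars: "\<forall>j\<in>{1..m}. \<forall>(i, b)\<in>Cl j. i \<in> {1..n}"
    and sat: "\<forall>j\<in>{1..m}. \<exists>(i, b)\<in>Cl j. a i = b"
  shows "dominating (red_verts n m) (red_adj n m Cl) (assignment_set n a)"
  unfolding dominating_def
proof (intro conjI ballI assignment_set_subset)
  let ?D = "assignment_set n a"
  have lit: "true_literal a i \<in> ?D" if "i \<in> {1..n}" for i
    using that by (simp add: assignment_set_def)
  fix v assume "v \<in> red_verts n m - ?D"
  then consider i where "i \<in> {1..n}" "v = U i" | i where "i \<in> {1..n}" "v = UB i"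
    | i where "i \<in> {1..n}" "v = V i" | j where "j \<in> {1..m}" "v = C j"
    | "v \<in> {S1, S3, S4}" | "v = T"
    by (auto simp: red_verts_def assignment_set_def)
  then show "\<exists>s\<in>?D. red_adj n m Cl v s"
  proof cases
    case (1 i)
    then show ?thesis
      by (intro bexI[of _ "X i"]) (auto simp: red_adj_sym red_adj_X assignment_set_def)
  next
    case (2 i)
    then show ?thesis
      by (intro bexI[of _ "Y i"]) (auto simp: red_adj_sym red_adj_Y assignment_set_def)
  next
    case (3 i)
    with lit[OF 3(1)] show ?thesis
      by (intro bexI[of _ "true_literal a i"]) (auto simp: red_adj_V true_literal_def)
  next
    case (4 j)
    with sat obtain i b where ib: "(i, b) \<in> Cl j" "a i = b" by blast
    with vars \<open>j \<in> {1..m}\<close> have "i \<in> {1..n}" by blast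
    with ib 4 lit[OF this] show ?thesis
      by (intro bexI[of _ "true_literal a i"]) (auto simp: red_adj_C true_literal_def)
  next
    case 5
    then show ?thesis by (auto simp: red_adj_S134 assignment_set_def)
  next
    case 6
    from n have "1 \<in> {1..n}" by simp
    with 6 lit[OF this] show ?thesis
      by (intro bexI[of _ "true_literal a 1"]) (auto simp: red_adj_T true_literal_def)
  qed
qed

text \<open>Every vertex outside the set reaches \<open>t\<close>: directly, via the false literal (from \<open>v\<^sub>i\<close>)
  or via \<open>s\<^sub>1\<close> (from a clause vertex).\<close>
lemma connected_complement_assignment_set:
  "induced_connected (red_adj n m Cl) (red_verts n m - assignment_set n a)"
proof (rule induced_connected_via_hub[OF red_adj_sym])
  let ?W = "red_verts n m - assignment_set n a"
  let ?R = "{(p, q). p \<in> ?W \<and> q \<in> ?W \<and> red_adj n m Cl p q}"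
  have in_W: "T \<in> ?W" "S1 \<in> ?W" "\<And>i. i \<in> {1..n} \<Longrightarrow> false_literal a i \<in> ?W"
    by (auto simp: red_verts_def assignment_set_def true_literal_def false_literal_def)
  have to_T: "(v, T) \<in> ?R\<^sup>*" if "v \<in> ?W" "red_adj n m Cl T v" for v
    using that in_W red_adj_sym by auto
  fix v assume v: "v \<in> ?W"
  then consider "v = T" | "red_adj n m Cl T v"
    | i where "i \<in> {1..n}" "v = V i" | j where "j \<in> {1..m}" "v = C j"
    by (auto simp: red_verts_def assignment_set_def red_adj_T)
  then show "(v, T) \<in> ?R\<^sup>*"
  proof cases
    case (3 i)
    have "red_adj n m Cl (V i) (false_literal a i)" "red_adj n m Cl T (false_literal a i)"
      using 3 by (auto simp: red_adj_V red_adj_T false_literal_def)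
    with 3 v in_W to_T show ?thesis by (blast intro: converse_rtrancl_into_rtrancl)
  next
    case (4 j)
    have "red_adj n m Cl (C j) S1" "red_adj n m Cl T S1"
      using 4 by (auto simp: red_adj_C red_adj_T)
    with 4 v in_W to_T show ?thesis by (blast intro: converse_rtrancl_into_rtrancl)
  qed (use v to_T in auto)
qed

lemma satisfiable_ocd:
  assumes "n \<ge> 1" "\<forall>j\<in>{1..m}. \<forall>(i, b)\<in>Cl j. i \<in> {1..n}" "satisfiable m Cl"
  obtains D where "outer_connected_dominating (red_verts n m) (red_adj n m Cl) D"
    "card D = 3 * n + 1"
proof -
  from assms(3) obtain a where "\<forall>j\<in>{1..m}. \<exists>(i, b)\<in>Cl j. a i = b"
    unfolding satisfiable_def by blast
  with assms(1,2) have "dominating (red_verts n m) (red_adj n m Cl) (assignment_set n a)"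
    by (rule dominating_assignment_set)
  then have "outer_connected_dominating (red_verts n m) (red_adj n m Cl) (assignment_set n a)"
    unfolding outer_connected_dominating_def using connected_complement_assignment_set by blast
  then show ?thesis using card_assignment_set by (rule that)
qed

theorem claim5p3:
  fixes n m :: nat and Cl :: "nat \<Rightarrow> (nat \<times> bool) set"
  assumes "n \<ge> 1"
    and "\<forall>j \<in> {1..m}. card (Cl j) = 3 \<and> (\<forall>(i, b) \<in> Cl j. i \<in> {1..n})"
  shows "gamma_oc (red_verts n m) (red_adj n m Cl) \<ge> 3 * n + 1
    \<and> (satisfiable m Cl \<longleftrightarrow> gamma_oc (red_verts n m) (red_adj n m Cl) = 3 * n + 1)"
proof -
  let ?\<gamma> = "gamma_oc (red_verts n m) (red_adj n m Cl)"
  obtain D where D: "outer_connected_dominating (red_verts n m) (red_adj n m Cl) D" "card D = ?\<gamma>"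
    by (rule gamma_oc_attained)
  have lower: "3 * n + 1 \<le> ?\<gamma>" using ocd_card_ge[OF D(1)] D(2) by simp
  moreover have "satisfiable m Cl \<longleftrightarrow> ?\<gamma> = 3 * n + 1"
  proof
    assume sat: "satisfiable m Cl"
    have vars: "\<forall>j\<in>{1..m}. \<forall>(i, b)\<in>Cl j. i \<in> {1..n}" using assms(2) by blast
    obtain D' where "outer_connected_dominating (red_verts n m) (red_adj n m Cl) D'"
      "card D' = 3 * n + 1"
      by (rule satisfiable_ocd[OF assms(1) vars sat])
    then have "?\<gamma> \<le> 3 * n + 1" using gamma_oc_le by metis
    with lower show "?\<gamma> = 3 * n + 1" by simp
  next
    assume "?\<gamma> = 3 * n + 1"
    with D show "satisfiable m Cl" by (simp add: tight_ocd_satisfiable)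
  qed
  ultimately show ?thesis by blast
qed

end
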